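(* Let $\Pi$ be the topological prismatoid \#1963 of Criado and Santos: a polyhedral $4$-sphere on the $14$ vertices $0,1,2,3,4,5,6,a,b,c,d,e,f,g$ whose simplicial facets are exactly the following $4$-simplices (each string lists the five vertices of a facet): 015cf, 0245f, 0256g, 025ce, 025cg, 06bcf, 125cf, 25bce, 0123d, 0126d, 0134e, 013ae, 013af, 013bd, 013bg, 013cf, 013cg, 0145f, 014ae, 014af, 0156g, 015cg, 016bd, 016bg, 0234e, 023bd, 023be, 024ae, 024af, 025ae, 025af, 026bd, 026be, 026ce, 026cg, 03abe, 03abf, 03bcf, 03bcg, 05ace, 05acf, 06abe, 06abf, 06ace, 06acf, 06bcg, 1234e, 123bd, 123be, 1245f, 124ac, 124af, 124bd, 124be, 124cd, 1256g, 125cg, 126cd, 126cg, 12acf, 13abe, 13abg, 13acf, 13acg, 14abe, 14abg, 14acg, 14bcd, 14bcg, 16bcd, 16bcg, 24abd, 24abe, 24acd, 25abd, 25abe, 25acd, 25acf, 25bcd, 26bcd, 26bce, 3abfg, 3acfg, 3bcfg, 4abcd, 4abcg, 5abde, 5acde, 5bcde, 6abef, 6acef, 6bcef, and which in addition has exactly two non-simplicial facets, its two bases, with vertex sets $\{0,1,\dots,6\}$ and $\{a,b,\dots,g\}$. Then $\Pi$ is not realizable: there is no convex $5$-polytope whose boundary complex is combinatorially isomorphic to $\Pi$.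
   Context: A topological prismatoid (Criado–Santos) is a combinatorial abstraction of a geometric prismatoid, i.e. of a polytope all of whose vertices lie in two parallel facets (the bases); all other facets are here simplices. *)

theory Defs
  imports "HOL-Analysis.Analysis"
begin

datatype lab = V0 | V1 | V2 | V3 | V4 | V5 | V6 | A | B | C | D | E | F | G

definition lab_of :: "char \<Rightarrow> lab" where
  "lab_of c = (if c = CHR ''0'' then V0 else if c = CHR ''1'' then V1 else if c = CHR ''2'' then V2 else if c = CHR ''3'' then V3 else if c = CHR ''4'' then V4 else if c = CHR ''5'' then V5 else if c = CHR ''6'' then V6 else if c = CHR ''a'' then A else if c = CHR ''b'' then B else if c = CHR ''c'' then C else if c = CHR ''d'' then D else if c = CHR ''e'' then E else if c = CHR ''f'' then F else G)"

definition fac :: "string \<Rightarrow> lab set" where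
  "fac s = lab_of ` set s"

definition simplex_facets_1963 :: "string list" where
  "simplex_facets_1963 =
    [''015cf'',
     ''0245f'',
     ''0256g'',
     ''025ce'',
     ''025cg'',
     ''06bcf'',
     ''125cf'',
     ''25bce'',
     ''0123d'',
     ''0126d'',
     ''0134e'',
     ''013ae'',
     ''013af'',
     ''013bd'',
     ''013bg'',
     ''013cf'',
     ''013cg'',
     ''0145f'',
     ''014ae'',
     ''014af'',
     ''0156g'',
     ''015cg'',
     ''016bd'',
     ''016bg'',
     ''0234e'',
     ''023bd'',
     ''023be'',
     ''024ae'',
     ''024af'',
     ''025ae'',
     ''025af'',
     ''026bd'',
     ''026be'',
     ''026ce'',
     ''026cg'',
     ''03abe'',
     ''03abf'',
     ''03bcf'',
     ''03bcg'',
     ''05ace'',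
     ''05acf'',
     ''06abe'',
     ''06abf'',
     ''06ace'',
     ''06acf'',
     ''06bcg'',
     ''1234e'',
     ''123bd'',
     ''123be'',
     ''1245f'',
     ''124ac'',
     ''124af'',
     ''124bd'',
     ''124be'',
     ''124cd'',
     ''1256g'',
     ''125cg'',
     ''126cd'',
     ''126cg'',
     ''12acf'',
     ''13abe'',
     ''13abg'',
     ''13acf'',
     ''13acg'',
     ''14abe'',
     ''14abg'',
     ''14acg'',
     ''14bcd'',
     ''14bcg'',
     ''16bcd'',
     ''16bcg'',
     ''24abd'',
     ''24abe'',
     ''24acd'',
     ''25abd'',
     ''25abe'',
     ''25acd'',
     ''25acf'',
     ''25bcd'',
     ''26bcd'',
     ''26bce'',
     ''3abfg'',
     ''3acfg'',
     ''3bcfg'',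
     ''4abcd'',
     ''4abcg'',
     ''5abde'',
     ''5acde'',
     ''5bcde'',
     ''6abef'',
     ''6acef'',
     ''6bcef'']"

definition Pi_facets :: "lab set set" where
  "Pi_facets = fac ` set simplex_facets_1963
      \<union> {{V0, V1, V2, V3, V4, V5, V6}, {A, B, C, D, E, F, G}}"

text \<open>A polytope is realization of a combinatorial sphere given by facet vertex sets
  if there is a bijection between the labels and the vertices of the polytope mapping
  the facets of the polytope exactly onto the given facets.  (The face lattice of a
  polytope is determined by its vertex-facet incidences.)\<close>
definition realizes :: "('a::euclidean_space) set \<Rightarrow> lab set set \<Rightarrow> bool" where
  "realizes P \<Phi> \<longleftrightarrow>
     (\<exists>v. bij_betw v (UNIV :: lab set) {x. x extreme_point_of P} \<and>
          {{i. v i \<in> Fc} | Fc. Fc facet_of P} = \<Phi>)"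

end

theory Submission
  imports Defs
begin

text \<open>
  If a facet of a polytope is cut out by a supporting hyperplane \<open>a \<bullet> x \<le> b\<close>, then every affine
  dependence \<open>\<lambda>\<close> of the vertices satisfies \<open>\<Sum>\<^sub>i \<lambda>\<^sub>i (a \<bullet> v\<^sub>i - b) = 0\<close>, where only
  vertices off the facet contribute, all with negative weight. Hence \<open>\<lambda>\<close> restricted to the
  complement of a facet is either zero or takes both signs.

  Apply this to the eight vertices 0,1,2,3,4,5,a,e in \<open>\<real>\<^sup>5\<close>. Any seven of them are affinely
  dependent; let \<open>\<alpha>\<close> be a dependence avoiding e and \<open>\<beta>\<close> one avoiding 5. The facets of \<open>\<Pi>\<close> force
  \<open>\<alpha>\<^sub>3, \<alpha>\<^sub>5\<close> to have one strict sign and \<open>\<alpha>\<^sub>4\<close> the other, and \<open>\<beta>\<^sub>3, \<beta>\<^sub>4\<close> to have the same strict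
  sign. The dependence \<open>\<delta> = \<beta>\<^sub>3 \<alpha> - \<alpha>\<^sub>3 \<beta>\<close> avoids 3, and for such dependences the facets
  forbid \<open>\<delta>\<^sub>4\<close> and \<open>\<delta>\<^sub>5\<close> to have strictly opposite signs. But \<open>\<delta>\<^sub>4 = \<beta>\<^sub>3 \<alpha>\<^sub>4 - \<alpha>\<^sub>3 \<beta>\<^sub>4\<close>
  and \<open>\<delta>\<^sub>5 = \<beta>\<^sub>3 \<alpha>\<^sub>5\<close> do.
\<close>

definition affine_dependence :: "('i \<Rightarrow> 'a::real_vector) \<Rightarrow> 'i set \<Rightarrow> ('i \<Rightarrow> real) \<Rightarrow> bool" where
  "affine_dependence v U l \<longleftrightarrow> sum l U = 0 \<and> (\<Sum>i\<in>U. l i *\<^sub>R v i) = 0"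

definition sign_balanced_on :: "('i \<Rightarrow> real) \<Rightarrow> 'i set \<Rightarrow> bool" where
  "sign_balanced_on l T \<longleftrightarrow> (\<forall>i\<in>T. l i = 0) \<or> (\<exists>i\<in>T. 0 < l i) \<and> (\<exists>j\<in>T. l j < 0)"

lemma affine_dependence_diff:
  assumes "affine_dependence v U l" "affine_dependence v U m"
  shows "affine_dependence v U (\<lambda>i. a * l i - b * m i)"
  using assms
  by (simp add: affine_dependence_def sum_subtractf scaleR_diff_left
      flip: sum_distrib_left scaleR_scaleR scaleR_sum_right)

lemma affine_dependence_exists:
  fixes v :: "'i \<Rightarrow> 'a::euclidean_space"
  assumes "inj_on v I" "I \<subseteq> U" "finite U" "DIM('a) + 2 \<le> card I"
  obtains l where "affine_dependence v U l" "\<And>i. i \<notin> I \<Longrightarrow> l i = 0" "\<exists>i\<in>I. l i \<noteq> 0"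
proof -
  have "finite I"
    using assms(2,3) finite_subset by blast
  moreover have "affine_dependent (v ` I)"
    using \<open>finite I\<close> assms(1,4) by (intro affine_dependent_biggerset) (simp_all add: card_image)
  ultimately obtain w where w: "sum w (v ` I) = 0" "\<exists>x\<in>v ` I. w x \<noteq> 0"
      "(\<Sum>x\<in>v ` I. w x *\<^sub>R x) = 0"
    by (auto simp: affine_dependent_explicit_finite)
  define l where "l i = (if i \<in> I then w (v i) else 0)" for i
  have "sum l U = sum (w \<circ> v) I"
    using assms(2,3) by (intro sum.mono_neutral_cong_right) (auto simp: l_def)
  moreover have "(\<Sum>i\<in>U. l i *\<^sub>R v i) = (\<Sum>i\<in>I. w (v i) *\<^sub>R v i)"
    using assms(2,3) by (intro sum.mono_neutral_cong_right) (auto simp: l_def)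
  ultimately have "affine_dependence v U l"
    using w(1,3) assms(1) by (simp add: affine_dependence_def sum.reindex)
  moreover have "\<And>i. i \<notin> I \<Longrightarrow> l i = 0" "\<exists>i\<in>I. l i \<noteq> 0"
    using w(2) by (auto simp: l_def)
  ultimately show thesis
    using that by blast
qed

lemma sign_balanced_onI_weighted_sum:
  assumes "finite T" "(\<Sum>i\<in>T. l i * c i) = 0" "\<And>i. i \<in> T \<Longrightarrow> c i < 0"
  shows "sign_balanced_on l T"
proof -
  have vanish: "m i = 0" if "\<forall>j\<in>T. 0 \<le> m j" "(\<Sum>j\<in>T. m j * c j) = 0" "i \<in> T" for m i
  proof -
    have sum_zero: "(\<Sum>j\<in>T. - (m j * c j)) = 0"
      using that(2) by (simp add: sum_negf)
    have nonneg: "0 \<le> - (m j * c j)" if "j \<in> T" for j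
      using \<open>\<forall>j\<in>T. 0 \<le> m j\<close> assms(3)[OF that] that by (simp add: mult_nonneg_nonpos)
    have "- (m i * c i) = 0"
      by (rule sum_nonneg_0[OF assms(1) nonneg sum_zero \<open>i \<in> T\<close>])
    then show "m i = 0"
      using assms(3)[OF \<open>i \<in> T\<close>] by simp
  qed
  show ?thesis
    unfolding sign_balanced_on_def
  proof (rule disjCI)
    assume "\<not> ((\<exists>i\<in>T. 0 < l i) \<and> (\<exists>j\<in>T. l j < 0))"
    then consider "\<forall>i\<in>T. 0 \<le> l i" | "\<forall>i\<in>T. 0 \<le> - l i"
      by (auto simp: not_less)
    then show "\<forall>i\<in>T. l i = 0"
    proof cases
      case 1
      then show ?thesis
        using vanish[of l] assms(2) by blast
    next
      case 2
      moreover have "(\<Sum>i\<in>T. - l i * c i) = 0"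
        using assms(2) by (simp add: sum_negf)
      ultimately show ?thesis
        using vanish[of "\<lambda>i. - l i"] by force
    qed
  qed
qed

lemma affine_dependence_sign_balanced_below_hyperplane:
  fixes v :: "'i \<Rightarrow> 'a::real_inner"
  assumes "finite U" "affine_dependence v U l" "\<And>i. i \<in> U \<Longrightarrow> a \<bullet> v i \<le> b"
  shows "sign_balanced_on l {i\<in>U. a \<bullet> v i < b}"
proof (rule sign_balanced_onI_weighted_sum)
  have "(\<Sum>i\<in>U. l i * (a \<bullet> v i - b)) = a \<bullet> (\<Sum>i\<in>U. l i *\<^sub>R v i) - b * sum l U"
    by (simp add: inner_sum_right algebra_simps sum_subtractf sum_distrib_left)
  also have "\<dots> = 0"
    using assms(2) by (simp add: affine_dependence_def)
  finally show "(\<Sum>i\<in>{i\<in>U. a \<bullet> v i < b}. l i * (a \<bullet> v i - b)) = 0"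
    using assms(1,3) by (subst (asm) sum.mono_neutral_right[where S = "{i\<in>U. a \<bullet> v i < b}"])
      (auto dest: order.not_eq_order_implies_strict)
qed (use assms(1) in auto)

lemma affine_dependence_sign_balanced_off_facet:
  fixes v :: "'i \<Rightarrow> 'a::euclidean_space"
  assumes "polyhedron P" "Fc facet_of P" "v ` U \<subseteq> P" "finite U" "affine_dependence v U l"
  shows "sign_balanced_on l (U - {i. v i \<in> Fc})"
proof -
  obtain a b where "P \<subseteq> {x. a \<bullet> x \<le> b}" "Fc = P \<inter> {x. a \<bullet> x = b}"
    using facet_of_polyhedron[OF assms(1,2)] by metis
  then have "U - {i. v i \<in> Fc} = {i\<in>U. a \<bullet> v i < b}" and "\<And>i. i \<in> U \<Longrightarrow> a \<bullet> v i \<le> b"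
    using assms(3) by force+
  then show ?thesis
    using affine_dependence_sign_balanced_below_hyperplane[OF assms(4,5)] by simp
qed

lemma realizes_sign_balanced:
  fixes P :: "'a::euclidean_space set"
  assumes "polytope P" "realizes P \<Phi>"
  obtains v :: "lab \<Rightarrow> 'a" where "inj v"
    "\<And>U l S. finite U \<Longrightarrow> affine_dependence v U l \<Longrightarrow> S \<in> \<Phi> \<Longrightarrow> sign_balanced_on l (U - S)"
proof -
  obtain v where v: "bij_betw v UNIV {x. x extreme_point_of P}"
    and facets: "{{i. v i \<in> Fc} | Fc. Fc facet_of P} = \<Phi>"
    using assms(2) by (auto simp: realizes_def)
  have "sign_balanced_on l (U - S)"
    if "finite U" "affine_dependence v U l" "S \<in> \<Phi>" for U l S
  proof -
    obtain Fc where "Fc facet_of P" "S = {i. v i \<in> Fc}"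
      using facets \<open>S \<in> \<Phi>\<close> by blast
    moreover have "v ` U \<subseteq> P"
      using v by (auto simp: bij_betw_def extreme_point_of_def)
    ultimately show ?thesis
      using affine_dependence_sign_balanced_off_facet polytope_imp_polyhedron assms(1) that(1,2)
      by blast
  qed
  moreover have "inj v"
    using v by (simp add: bij_betw_def)
  ultimately show thesis
    using that by blast
qed

definition core_vertices :: "lab set" where
  "core_vertices = {V0, V1, V2, V3, V4, V5, A, E}"

definition facet_orthogonal :: "(lab \<Rightarrow> real) \<Rightarrow> bool" where
  "facet_orthogonal l \<longleftrightarrow> (\<forall>S\<in>Pi_facets. sign_balanced_on l (core_vertices - S))"

lemma simplex_facet_in_Pi_facets: "s \<in> set simplex_facets_1963 \<Longrightarrow> fac s \<in> Pi_facets"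
  by (simp add: Pi_facets_def)

lemma Pi_facets_bases:
  "{V0, V1, V2, V3, V4, V5, V6} \<in> Pi_facets" "{A, B, C, D, E, F, G} \<in> Pi_facets"
  by (simp_all add: Pi_facets_def)

lemma Pi_facets_simplices:
  "{V0, V1, V2, V6, D} \<in> Pi_facets" "{V1, V2, V3, V4, E} \<in> Pi_facets"
  "{V1, V2, V4, V5, F} \<in> Pi_facets" "{V2, V6, B, C, E} \<in> Pi_facets"
  "{V0, V1, V4, A, E} \<in> Pi_facets" "{V1, V2, V4, A, F} \<in> Pi_facets"
  "{V1, V2, V4, B, E} \<in> Pi_facets" "{V1, V3, A, B, E} \<in> Pi_facets"
  "{V0, V2, V4, A, E} \<in> Pi_facets" "{V2, V5, A, B, E} \<in> Pi_facets"
  using simplex_facet_in_Pi_facets[of "''0126d''"] simplex_facet_in_Pi_facets[of "''1234e''"]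
    simplex_facet_in_Pi_facets[of "''1245f''"] simplex_facet_in_Pi_facets[of "''26bce''"]
    simplex_facet_in_Pi_facets[of "''014ae''"] simplex_facet_in_Pi_facets[of "''124af''"]
    simplex_facet_in_Pi_facets[of "''124be''"] simplex_facet_in_Pi_facets[of "''13abe''"]
    simplex_facet_in_Pi_facets[of "''024ae''"] simplex_facet_in_Pi_facets[of "''25abe''"]
  by (simp_all add: simplex_facets_1963_def fac_def lab_of_def insert_commute)

lemma facet_orthogonal_sign_balanced:
  assumes "facet_orthogonal l"
  shows "sign_balanced_on l {A, E}" "sign_balanced_on l {V0, V1, V2, V3, V4, V5}"
    "sign_balanced_on l {V3, V4, V5, A, E}" "sign_balanced_on l {V0, V5, A}"
    "sign_balanced_on l {V0, V3, A, E}" "sign_balanced_on l {V0, V1, V3, V4, V5, A}"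
    "sign_balanced_on l {V2, V3, V5}" "sign_balanced_on l {V0, V3, V5, E}"
    "sign_balanced_on l {V0, V3, V5, A}" "sign_balanced_on l {V0, V2, V4, V5}"
    "sign_balanced_on l {V1, V3, V5}" "sign_balanced_on l {V0, V1, V3, V4}"
  \<comment> \<open>\<open>core_vertices\<close> minus, in this order, the facets 0123456, abcdefg, 0126d, 1234e,
    1245f, 26bce, 014ae, 124af, 124be, 13abe, 024ae, 25abe\<close>
  using Pi_facets_bases[THEN bspec[OF assms[unfolded facet_orthogonal_def]]]
    Pi_facets_simplices[THEN bspec[OF assms[unfolded facet_orthogonal_def]]]
  by (simp_all add: core_vertices_def insert_Diff_if insert_commute)

lemma sign_balanced_on_uminus [simp]:
  "sign_balanced_on (\<lambda>i. - l i) T \<longleftrightarrow> sign_balanced_on l T"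
  by (auto simp: sign_balanced_on_def)

lemma facet_orthogonal_uminus [simp]: "facet_orthogonal (\<lambda>i. - l i) \<longleftrightarrow> facet_orthogonal l"
  by (simp add: facet_orthogonal_def)

lemma facet_orthogonal_signs_without_E_pos:
  assumes orth: "facet_orthogonal l" and "l E = 0" and "0 < l V0"
  shows "l V3 < 0 \<and> 0 < l V4 \<and> l V5 < 0"
proof -
  note balanced = facet_orthogonal_sign_balanced(1,3,4,5)[OF orth, unfolded sign_balanced_on_def]
  have "l A = 0"
    using balanced(1) \<open>l E = 0\<close> by auto
  then have "l V5 < 0" "l V3 < 0"
    using balanced(3,4) \<open>l E = 0\<close> \<open>0 < l V0\<close> by auto
  moreover from this have "0 < l V4"
    using balanced(2) \<open>l A = 0\<close> \<open>l E = 0\<close> by auto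
  ultimately show ?thesis
    by blast
qed

lemma facet_orthogonal_signs_without_E:
  assumes orth: "facet_orthogonal l" and "l E = 0"
    and nonzero: "\<exists>i\<in>{V0, V1, V2, V3, V4, V5, A}. l i \<noteq> 0"
  shows "l V4 * l V5 < 0" "0 < l V3 * l V5"
proof -
  note balanced = facet_orthogonal_sign_balanced(1-6)[OF orth, unfolded sign_balanced_on_def]
  have "l A = 0"
    using balanced(1) \<open>l E = 0\<close> by auto
  have "l V0 \<noteq> 0"
  proof
    assume "l V0 = 0"
    then have "l V3 = 0" "l V5 = 0"
      using balanced(4,5) \<open>l A = 0\<close> \<open>l E = 0\<close> by auto
    moreover from this have "l V4 = 0"
      using balanced(3) \<open>l A = 0\<close> \<open>l E = 0\<close> by auto
    moreover from calculation have "l V1 = 0"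
      using balanced(6) \<open>l V0 = 0\<close> \<open>l A = 0\<close> by auto
    moreover from calculation have "l V2 = 0"
      using balanced(2) \<open>l V0 = 0\<close> by auto
    ultimately show False
      using nonzero \<open>l V0 = 0\<close> \<open>l A = 0\<close> by auto
  qed
  then consider "0 < l V0" | "0 < - l V0"
    by linarith
  then have "(l V3 < 0 \<and> 0 < l V4 \<and> l V5 < 0) \<or> (0 < l V3 \<and> l V4 < 0 \<and> 0 < l V5)"
  proof cases
    case 1
    then show ?thesis
      using facet_orthogonal_signs_without_E_pos[OF orth \<open>l E = 0\<close>] by blast
  next
    case 2
    then show ?thesis
      using facet_orthogonal_signs_without_E_pos[of "\<lambda>i. - l i"] orth \<open>l E = 0\<close> by simp
  qed
  then show "l V4 * l V5 < 0" "0 < l V3 * l V5"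
    by (auto simp: mult_less_0_iff zero_less_mult_iff)
qed

lemma facet_orthogonal_signs_without_V5_pos:
  assumes orth: "facet_orthogonal l" and "l V5 = 0" and "0 < l V3"
  shows "0 < l V4"
proof (rule ccontr)
  note balanced = facet_orthogonal_sign_balanced(1,7-10)[OF orth, unfolded sign_balanced_on_def]
  assume "\<not> 0 < l V4"
  have "l V2 < 0"
    using balanced(2) \<open>l V5 = 0\<close> \<open>0 < l V3\<close> by auto
  with \<open>\<not> 0 < l V4\<close> have "0 < l V0"
    using balanced(5) \<open>l V5 = 0\<close> by auto
  then have "l E < 0" "l A < 0"
    using balanced(3,4) \<open>l V5 = 0\<close> \<open>0 < l V3\<close> by auto
  then show False
    using balanced(1) by auto
qed

lemma facet_orthogonal_signs_without_V5:
  assumes orth: "facet_orthogonal l" and "l V5 = 0"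
    and nonzero: "\<exists>i\<in>{V0, V1, V2, V3, V4, A, E}. l i \<noteq> 0"
  shows "0 < l V3 * l V4"
proof -
  note balanced = facet_orthogonal_sign_balanced(1,2,7-10)[OF orth, unfolded sign_balanced_on_def]
  have "l V3 \<noteq> 0"
  proof
    assume "l V3 = 0"
    then have "l V2 = 0"
      using balanced(3) \<open>l V5 = 0\<close> by auto
    have "l V0 = 0"
    proof (rule ccontr)
      assume "l V0 \<noteq> 0"
      then have "(l A < 0 \<and> l E < 0) \<or> (0 < l A \<and> 0 < l E)"
        using balanced(4,5) \<open>l V3 = 0\<close> \<open>l V5 = 0\<close> by auto
      then show False
        using balanced(1) by auto
    qed
    then have "l A = 0" "l E = 0"
      using balanced(4,5) \<open>l V3 = 0\<close> \<open>l V5 = 0\<close> by auto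
    moreover have "l V4 = 0"
      using balanced(6) \<open>l V0 = 0\<close> \<open>l V2 = 0\<close> \<open>l V5 = 0\<close> by auto
    moreover from this have "l V1 = 0"
      using balanced(2) \<open>l V0 = 0\<close> \<open>l V2 = 0\<close> \<open>l V3 = 0\<close> \<open>l V5 = 0\<close> by auto
    ultimately show False
      using nonzero \<open>l V0 = 0\<close> \<open>l V2 = 0\<close> \<open>l V3 = 0\<close> by auto
  qed
  then consider "0 < l V3" | "0 < - l V3"
    by linarith
  then show ?thesis
  proof cases
    case 1
    then show ?thesis
      using facet_orthogonal_signs_without_V5_pos[OF orth \<open>l V5 = 0\<close>] by simp
  next
    case 2
    then have "0 < - l V4"
      using facet_orthogonal_signs_without_V5_pos[of "\<lambda>i. - l i"] orth \<open>l V5 = 0\<close> by simp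
    with 2 show ?thesis
      by (simp add: zero_less_mult_iff)
  qed
qed

lemma facet_orthogonal_signs_without_V3_pos:
  assumes orth: "facet_orthogonal l" and "l V3 = 0" and "0 < l V5"
  shows "0 \<le> l V4"
proof (rule ccontr)
  note balanced = facet_orthogonal_sign_balanced(1,8,9,11,12)[OF orth, unfolded sign_balanced_on_def]
  assume "\<not> 0 \<le> l V4"
  have "l V1 < 0"
    using balanced(4) \<open>l V3 = 0\<close> \<open>0 < l V5\<close> by auto
  with \<open>\<not> 0 \<le> l V4\<close> have "0 < l V0"
    using balanced(5) \<open>l V3 = 0\<close> by auto
  then have "l E < 0" "l A < 0"
    using balanced(2,3) \<open>l V3 = 0\<close> \<open>0 < l V5\<close> by auto
  then show False
    using balanced(1) by auto
qed

lemma facet_orthogonal_signs_without_V3: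
  assumes orth: "facet_orthogonal l" and "l V3 = 0"
  shows "0 \<le> l V4 * l V5"
proof (cases "0 < l V5")
  case True
  then show ?thesis
    using facet_orthogonal_signs_without_V3_pos[OF orth \<open>l V3 = 0\<close>] by simp
next
  case False
  have "0 \<le> l V5 \<or> 0 \<le> - l V4"
    using facet_orthogonal_signs_without_V3_pos[of "\<lambda>i. - l i"] orth \<open>l V3 = 0\<close> by force
  with False show ?thesis
    by (auto simp: mult_nonpos_nonpos)
qed

lemma facet_orthogonal_sign_obstruction:
  assumes "facet_orthogonal \<alpha>" "\<alpha> E = 0" "\<exists>i\<in>{V0, V1, V2, V3, V4, V5, A}. \<alpha> i \<noteq> 0"
    and "facet_orthogonal \<beta>" "\<beta> V5 = 0" "\<exists>i\<in>{V0, V1, V2, V3, V4, A, E}. \<beta> i \<noteq> 0"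
  shows "\<not> facet_orthogonal (\<lambda>i. \<beta> V3 * \<alpha> i - \<alpha> V3 * \<beta> i)"
proof
  assume "facet_orthogonal (\<lambda>i. \<beta> V3 * \<alpha> i - \<alpha> V3 * \<beta> i)" (is "facet_orthogonal ?\<delta>")
  then have "0 \<le> ?\<delta> V4 * ?\<delta> V5"
    by (rule facet_orthogonal_signs_without_V3) simp
  have \<alpha>_signs: "\<alpha> V4 * \<alpha> V5 < 0" "0 < \<alpha> V3 * \<alpha> V5"
    by (rule facet_orthogonal_signs_without_E[OF assms(1-3)])+
  have \<beta>_sign: "0 < \<beta> V3 * \<beta> V4"
    by (rule facet_orthogonal_signs_without_V5[OF assms(4-6)])
  then have "0 < \<beta> V3 * \<beta> V3"
    by (auto simp: zero_less_mult_iff)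
  have "?\<delta> V4 * ?\<delta> V5 = (\<beta> V3 * \<beta> V3) * (\<alpha> V4 * \<alpha> V5) - (\<alpha> V3 * \<alpha> V5) * (\<beta> V3 * \<beta> V4)"
    by (simp add: assms(5) algebra_simps)
  also have "\<dots> < 0"
    using mult_pos_neg[OF \<open>0 < \<beta> V3 * \<beta> V3\<close> \<alpha>_signs(1)] mult_pos_pos[OF \<alpha>_signs(2) \<beta>_sign]
    by linarith
  finally show False
    using \<open>0 \<le> ?\<delta> V4 * ?\<delta> V5\<close> by linarith
qed

theorem mainTheorem4:
  shows "\<not> (\<exists>P :: (real^5) set. polytope P \<and> aff_dim P = 5 \<and> realizes P Pi_facets)"
proof
  assume "\<exists>P :: (real^5) set. polytope P \<and> aff_dim P = 5 \<and> realizes P Pi_facets"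
  then obtain P :: "(real^5) set" where "polytope P" "realizes P Pi_facets"
    by blast
  then obtain v :: "lab \<Rightarrow> real^5" where "inj v"
    and balanced: "\<And>U l S. finite U \<Longrightarrow> affine_dependence v U l \<Longrightarrow> S \<in> Pi_facets \<Longrightarrow>
      sign_balanced_on l (U - S)"
    using realizes_sign_balanced by metis
  have orthogonal: "facet_orthogonal l" if "affine_dependence v core_vertices l" for l
    using balanced[OF _ that] by (simp add: facet_orthogonal_def core_vertices_def)
  note dependence = affine_dependence_exists[OF inj_on_subset[OF \<open>inj v\<close> subset_UNIV], of _ core_vertices]
  obtain \<alpha> where \<alpha>: "affine_dependence v core_vertices \<alpha>" "\<alpha> E = 0"
      "\<exists>i\<in>{V0, V1, V2, V3, V4, V5, A}. \<alpha> i \<noteq> 0"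
    using dependence[of "{V0, V1, V2, V3, V4, V5, A}"] by (auto simp: core_vertices_def)
  obtain \<beta> where \<beta>: "affine_dependence v core_vertices \<beta>" "\<beta> V5 = 0"
      "\<exists>i\<in>{V0, V1, V2, V3, V4, A, E}. \<beta> i \<noteq> 0"
    using dependence[of "{V0, V1, V2, V3, V4, A, E}"] by (auto simp: core_vertices_def)
  have "affine_dependence v core_vertices (\<lambda>i. \<beta> V3 * \<alpha> i - \<alpha> V3 * \<beta> i)"
    using \<alpha>(1) \<beta>(1) by (rule affine_dependence_diff)
  then show False
    using facet_orthogonal_sign_obstruction[OF orthogonal[OF \<alpha>(1)] \<alpha>(2,3) orthogonal[OF \<beta>(1)] \<beta>(2,3)]
      orthogonal by blast
qed

end
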